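(* The Kelvin circulation theorem for the current alone is given by, \begin{align} \frac{d}{dt}\oint_{c(\mathbf{\widehat v})} \mathbf{\widehat{v}}\cdot d\mathbf{r} = - \oint_{c(\mathbf{\widehat v})} \frac{1}{\rho}dp - d \frac{|\mathbf{\widehat{v}}|^2}{2} \,. \end{align}
   Context: Setting: a 2D free surface model in which the horizontal current velocity $\mathbf{\widehat v}(\mathbf{r},t)$ transports a vertical wave elevation $\zeta(\mathbf{r},t)$ with vertical velocity $\widehat{w} = \partial_t\zeta + \mathbf{\widehat{v}}\cdot\nabla_{\mathbf{r}}\zeta$, derived from Hamilton's principle with Lagrangian $\ell=\int_{\cal D}\Big( \tfrac{1}{2}\big( |\mathbf{\widehat{v}}|^2 + \sigma^2\widehat w^2 \big) - \tfrac{\rho_{ref}}{\rho} \tfrac{\zeta^2}{2Fr^2} \Big) D\rho - p(D-1)\,d^2r$, with constants $\sigma^2, Fr^2,\rho_{ref}$, advected areal density $D\,d^2r$ and buoyancy $\rho$, and pressure $p$ enforcing $D=1$ ($\mathrm{div}\,\mathbf{\widehat v}=0$). The full Kelvin theorem for this model reads $\frac{d}{dt}\oint_{c(\mathbf{\widehat v})} ( \mathbf{\widehat{v}}\cdot d\mathbf{r} + \sigma^2\widehat{w}\,d\zeta) = \oint_{c(\mathbf{\widehat v})} -\rho^{-1} d\widetilde p + d\widetilde\varpi$ with $\widetilde p = p+\rho_{ref}\zeta^2/(2Fr^2)$, $\widetilde\varpi=\tfrac12(|\mathbf{\widehat v}|^2+\sigma^2\widehat w^2)$, and the wave equations $(\partial_t+\mathbf{\widehat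 v}\cdot\nabla)\widehat w = -\rho_{ref}\zeta/(\sigma^2Fr^2\rho)$, $(\partial_t+\mathbf{\widehat v}\cdot\nabla)\zeta=\widehat w$. The loop $c(\mathbf{\widehat v})$ moves with the horizontal flow. *)

theory Defs
  imports "HOL-Analysis.Analysis"
begin

fun Ck :: "nat \<Rightarrow> ('a::real_normed_vector \<Rightarrow> 'b::real_normed_vector) \<Rightarrow> bool" where
  "Ck 0 f = continuous_on UNIV f"
| "Ck (Suc k) f = ((\<forall>x. f differentiable (at x)) \<and>
                   (\<forall>h. Ck k (\<lambda>x. frechet_derivative f (at x) h)))"

definition smooth :: "('a::real_normed_vector \<Rightarrow> 'b::real_normed_vector) \<Rightarrow> bool" where
  "smooth f \<longleftrightarrow> (\<forall>k. Ck k f)"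

text \<open>The loop c(v) at time t: the initial closed loop c (parametrised on [0,1])
  transported by the Lagrangian flow map phi of the horizontal velocity.\<close>
definition loop_at :: "(real \<Rightarrow> real^2 \<Rightarrow> real^2) \<Rightarrow> (real \<Rightarrow> real^2) \<Rightarrow> real \<Rightarrow> real \<Rightarrow> real^2" where
  "loop_at \<phi> c t = (\<lambda>s. \<phi> t (c s))"

definition oint_dr :: "(real^2 \<Rightarrow> real^2) \<Rightarrow> (real \<Rightarrow> real^2) \<Rightarrow> real" where
  "oint_dr u \<gamma> = integral {0..1} (\<lambda>s. u (\<gamma> s) \<bullet> vector_derivative \<gamma> (at s))"

definition oint_d :: "(real^2 \<Rightarrow> real) \<Rightarrow> (real^2 \<Rightarrow> real) \<Rightarrow> (real \<Rightarrow> real^2) \<Rightarrow> real" where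
  "oint_d f g \<gamma> = integral {0..1} (\<lambda>s. f (\<gamma> s) * deriv (\<lambda>u. g (\<gamma> u)) s)"

end

theory Submission
  imports Defs
begin

(* Along the trajectories of the flow, D\<zeta>/Dt = w and Dw/Dt = - \<rho>ref \<zeta> / (\<sigma>^2 Fr^2 \<rho>).
   Hence the wave part of the full circulation evolves by
     d/dt \<oint> \<sigma>^2 w d\<zeta> = \<oint> \<sigma>^2 (Dw/Dt) d\<zeta> + \<oint> \<sigma>^2 w dw = \<oint> - \<rho>ref \<zeta> d\<zeta> / (Fr^2 \<rho>),
   the last loop integral vanishing because w dw is exact.  This is exactly the contribution of
   \<rho>ref \<zeta>^2 / (2 Fr^2) to the pressure term of the full Kelvin theorem, so subtracting the wave
   part leaves the circulation of - \<rho>^-1 dp; all remaining terms are loop integrals of exact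
   differentials and vanish. *)

lemma continuous_on_compose_Pair_UNIV:
  "continuous_on UNIV (\<lambda>(a, b). f a b) \<Longrightarrow> continuous_on C g \<Longrightarrow> continuous_on C h \<Longrightarrow>
    continuous_on C (\<lambda>c. f (g c) (h c))"
  by (rule continuous_on_compose_Pair[of UNIV "\<lambda>_. UNIV"]) auto

lemma smooth_differentiable: "smooth f \<Longrightarrow> f differentiable (at x)"
  unfolding smooth_def by (metis Ck.simps(2))

lemma smooth_continuous_on: "smooth f \<Longrightarrow> continuous_on UNIV f"
  unfolding smooth_def by (metis Ck.simps(1))

lemma smooth_frechet_derivative_continuous_on:
  "smooth f \<Longrightarrow> continuous_on UNIV (\<lambda>x. frechet_derivative f (at x) h)"
  unfolding smooth_def by (metis Ck.simps)

lemma smooth_has_derivative: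
  "smooth f \<Longrightarrow> (f has_derivative frechet_derivative f (at x)) (at x)"
  using frechet_derivative_works smooth_differentiable by blast

lemma continuous_on_smooth_frechet_derivative_comp:
  fixes f :: "'a::euclidean_space \<Rightarrow> 'b::real_normed_vector"
  assumes f: "smooth f" and a: "continuous_on S a" and b: "continuous_on S b"
  shows "continuous_on S (\<lambda>y. frechet_derivative f (at (a y)) (b y))"
proof -
  have expand: "frechet_derivative f (at x) h = (\<Sum>i\<in>Basis. (h \<bullet> i) *\<^sub>R frechet_derivative f (at x) i)"
    for x h
  proof -
    have "linear (frechet_derivative f (at x))"
      using has_derivative_linear smooth_has_derivative[OF f] by blast
    then have "frechet_derivative f (at x) (\<Sum>i\<in>Basis. (h \<bullet> i) *\<^sub>R i)
        = (\<Sum>i\<in>Basis. (h \<bullet> i) *\<^sub>R frechet_derivative f (at x) i)"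
      by (simp only: linear_sum linear_scale o_def)
    then show ?thesis
      by (simp add: euclidean_representation)
  qed
  have "continuous_on S (\<lambda>y. frechet_derivative f (at (a y)) i)" for i
    using continuous_on_compose2[OF smooth_frechet_derivative_continuous_on[OF f] a] by simp
  then have "continuous_on S (\<lambda>y. \<Sum>i\<in>Basis. (b y \<bullet> i) *\<^sub>R frechet_derivative f (at (a y)) i)"
    by (intro continuous_intros b)
  then show ?thesis
    by (subst expand)
qed

definition C1_family :: "(real \<Rightarrow> real \<Rightarrow> 'a::real_normed_vector) \<Rightarrow> (real \<Rightarrow> real \<Rightarrow> 'a) \<Rightarrow> bool"
  where "C1_family \<gamma> \<gamma>' \<longleftrightarrow>
    (\<forall>s u. (\<gamma> s has_vector_derivative \<gamma>' s u) (at u)) \<and>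
    continuous_on UNIV (\<lambda>(s, u). \<gamma> s u) \<and> continuous_on UNIV (\<lambda>(s, u). \<gamma>' s u)"

lemma C1_family_smooth_comp:
  fixes f :: "'a::euclidean_space \<Rightarrow> 'b::real_normed_vector"
  assumes f: "smooth f" and \<gamma>: "C1_family \<gamma> \<gamma>'"
  shows "C1_family (\<lambda>s u. f (\<gamma> s u)) (\<lambda>s u. frechet_derivative f (at (\<gamma> s u)) (\<gamma>' s u))"
  unfolding C1_family_def
proof (intro conjI allI)
  fix s u
  have "(\<gamma> s has_vector_derivative \<gamma>' s u) (at u)"
    using \<gamma> by (simp add: C1_family_def)
  from vector_derivative_diff_chain_within[OF this has_derivative_at_withinI[OF smooth_has_derivative[OF f]]]
  show "((\<lambda>u. f (\<gamma> s u)) has_vector_derivative frechet_derivative f (at (\<gamma> s u)) (\<gamma>' s u)) (at u)"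
    by (simp add: comp_def)
next
  have c: "continuous_on UNIV (\<lambda>y. \<gamma> (fst y) (snd y))" "continuous_on UNIV (\<lambda>y. \<gamma>' (fst y) (snd y))"
    using \<gamma> by (simp_all add: C1_family_def case_prod_beta)
  show "continuous_on UNIV (\<lambda>(s, u). f (\<gamma> s u))"
    using continuous_on_compose2[OF smooth_continuous_on[OF f] c(1)] by (simp add: case_prod_beta)
  show "continuous_on UNIV (\<lambda>(s, u). frechet_derivative f (at (\<gamma> s u)) (\<gamma>' s u))"
    using continuous_on_smooth_frechet_derivative_comp[OF f c] by (simp add: case_prod_beta)
qed

lemma C1_family_Pair_time:
  "C1_family \<gamma> \<gamma>' \<Longrightarrow> C1_family (\<lambda>s u. (s, \<gamma> s u)) (\<lambda>s u. (0, \<gamma>' s u))"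
  unfolding C1_family_def case_prod_beta
  by (auto intro!: has_vector_derivative_Pair has_vector_derivative_const continuous_on_Pair
      continuous_on_fst)

lemma C1_family_smooth_curve:
  assumes "smooth c"
  shows "C1_family (\<lambda>s. c) (\<lambda>s u. frechet_derivative c (at u) 1)"
  unfolding C1_family_def case_prod_beta
proof (intro conjI allI)
  fix u :: real
  show "(c has_vector_derivative frechet_derivative c (at u) 1) (at u)"
    using smooth_differentiable[OF assms]
    by (simp add: frechet_derivative_eq_vector_derivative vector_derivative_works)
  show "continuous_on UNIV (\<lambda>p. c (snd p))"
    using continuous_on_compose2[OF smooth_continuous_on[OF assms] continuous_on_snd[OF continuous_on_id]]
    by simp
  show "continuous_on UNIV (\<lambda>p. frechet_derivative c (at (snd p)) 1)"
    using continuous_on_compose2[OF smooth_frechet_derivative_continuous_on[OF assms]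
        continuous_on_snd[OF continuous_on_id]]
    by simp
qed

lemma C1_family_spacetime_transported_curve:
  fixes \<phi> :: "real \<Rightarrow> 'a::euclidean_space \<Rightarrow> 'b::euclidean_space"
  assumes "smooth (\<lambda>(t, x). \<phi> t x)" and "smooth c"
  obtains \<gamma>' where "C1_family (\<lambda>s u. (s, \<phi> s (c u))) \<gamma>'"
  using C1_family_Pair_time[OF C1_family_smooth_comp[OF assms(1)
          C1_family_Pair_time[OF C1_family_smooth_curve[OF assms(2)]]]]
  unfolding case_prod_conv by (rule that)

lemma C1_family_along_transported_curve:
  fixes F :: "real \<Rightarrow> 'b::euclidean_space \<Rightarrow> 'c::real_normed_vector"
    and \<phi> :: "real \<Rightarrow> 'a::euclidean_space \<Rightarrow> 'b"
  assumes "smooth (\<lambda>(t, x). F t x)" and "smooth (\<lambda>(t, x). \<phi> t x)" and "smooth c"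
  obtains DF where "C1_family (\<lambda>s u. F s (\<phi> s (c u))) DF"
proof -
  obtain \<gamma>' where "C1_family (\<lambda>s u. (s, \<phi> s (c u))) \<gamma>'"
    using C1_family_spacetime_transported_curve[OF assms(2,3)] .
  from C1_family_smooth_comp[OF assms(1) this] show thesis
    unfolding case_prod_conv by (rule that)
qed

lemma C1_family_has_real_derivative:
  "C1_family Z DZ \<Longrightarrow> ((\<lambda>u. Z s u) has_real_derivative DZ s u) (at u)"
  by (simp add: C1_family_def has_real_derivative_iff_has_vector_derivative)

lemma C1_family_deriv: "C1_family Z DZ \<Longrightarrow> deriv (Z s) u = DZ s u"
  using C1_family_has_real_derivative DERIV_imp_deriv by fastforce

lemma integral_derivative_closed_eq_0:
  fixes h :: "real \<Rightarrow> real"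
  assumes "\<And>u. (h has_real_derivative h' u) (at u)" and "h 0 = h 1"
  shows "integral {0..1} h' = 0"
proof -
  have "(h' has_integral (h 1 - h 0)) {0..1}"
    by (rule fundamental_theorem_of_calculus)
       (auto simp: has_real_derivative_iff_has_vector_derivative[symmetric]
             intro: has_field_derivative_at_within assms(1))
  then show ?thesis using assms(2) by (simp add: integral_unique)
qed

lemma has_real_derivative_integral_parametric:
  fixes f f' :: "real \<Rightarrow> real \<Rightarrow> real"
  assumes f': "\<And>x u. ((\<lambda>x. f x u) has_real_derivative f' x u) (at x)"
    and f: "\<And>x. continuous_on {a..b} (f x)"
    and cont: "continuous_on UNIV (\<lambda>(x, u). f' x u)"
  shows "((\<lambda>x. integral {a..b} (f x)) has_real_derivative integral {a..b} (f' x)) (at x)"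
proof -
  have "((\<lambda>x. integral (cbox a b) (f x)) has_field_derivative integral (cbox a b) (f' x))
      (at x within UNIV)"
  proof (rule leibniz_rule_field_derivative[where fx=f'])
    show "((\<lambda>x. f x u) has_field_derivative f' x u) (at x within UNIV)" for x u
      using f' by simp
    show "f x integrable_on cbox a b" for x
      using f by (simp add: integrable_continuous_real)
    show "continuous_on (UNIV \<times> cbox a b) (\<lambda>(x, u). f' x u)"
      using continuous_on_subset[OF cont] by blast
  qed auto
  then show ?thesis by simp
qed

(* No second derivatives are assumed: Z s u = Z a u + \<integral>_a^s W r u dr, and differentiating under
   the integral sign in u writes DZ s u as DZ a u plus the time integral of DW. *)
lemma C1_family_mixed_partial:
  assumes Z: "C1_family Z DZ" and W: "C1_family W DW"
    and Zs: "\<And>s u. ((\<lambda>s. Z s u) has_real_derivative W s u) (at s)"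
  shows "((\<lambda>s. DZ s u) has_real_derivative DW s u) (at s)"
proof -
  have cW: "continuous_on UNIV (\<lambda>(s, u). W s u)" and cDW: "continuous_on UNIV (\<lambda>(s, u). DW s u)"
    using W by (simp_all add: C1_family_def)
  define a where "a = s - 1"
  have DZ_integral: "DZ s' u = DZ a u + integral {a..s'} (\<lambda>r. DW r u)" if "a \<le> s'" for s'
  proof -
    have "Z s' u' = Z a u' + integral {a..s'} (\<lambda>r. W r u')" for u'
    proof -
      have "((\<lambda>r. W r u') has_integral (Z s' u' - Z a u')) {a..s'}"
        by (rule fundamental_theorem_of_calculus[OF that])
           (auto simp: has_real_derivative_iff_has_vector_derivative[symmetric]
             intro: has_field_derivative_at_within Zs)
      then show ?thesis by (simp add: integral_unique)
    qed
    moreover have "((\<lambda>u'. Z a u' + integral {a..s'} (\<lambda>r. W r u')) has_real_derivative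
        DZ a u + integral {a..s'} (\<lambda>r. DW r u)) (at u)"
    proof (intro DERIV_add C1_family_has_real_derivative[OF Z] has_real_derivative_integral_parametric)
      show "((\<lambda>u. W r u) has_real_derivative DW r u) (at u)" for r u
        by (rule C1_family_has_real_derivative[OF W])
      show "continuous_on {a..s'} (\<lambda>r. W r u')" for u'
        using continuous_on_compose_Pair_UNIV[OF cW continuous_on_id continuous_on_const] .
      show "continuous_on UNIV (\<lambda>(u, r). DW r u)"
        using continuous_on_compose_Pair_UNIV[OF cDW continuous_on_snd continuous_on_fst,
            OF continuous_on_id continuous_on_id]
        by (simp add: case_prod_beta)
    qed
    ultimately show ?thesis
      using DERIV_unique C1_family_has_real_derivative[OF Z, of s' u] by fastforce
  qed
  have "((\<lambda>s'. integral {a..s'} (\<lambda>r. DW r u)) has_real_derivative DW s u) (at s within {a..s + 1})"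
  proof (rule integral_has_real_derivative)
    show "continuous_on {a..s + 1} (\<lambda>r. DW r u)"
      using continuous_on_compose_Pair_UNIV[OF cDW continuous_on_id continuous_on_const] .
  qed (simp add: a_def)
  then have "((\<lambda>s'. DZ a u + integral {a..s'} (\<lambda>r. DW r u)) has_real_derivative DW s u) (at s)"
    using DERIV_add[OF DERIV_const] at_within_interior[of s "{a..s + 1}"] by (simp add: a_def)
  then show ?thesis
  proof (rule has_field_derivative_transform_within_open[where S="{a<..}"])
    show "DZ a u + integral {a..x} (\<lambda>r. DW r u) = DZ x u" if "x \<in> {a<..}" for x
      using DZ_integral[of x] that by simp
  qed (simp_all add: a_def)
qed

lemma has_real_derivative_loop_integral_W_dZ:
  assumes Z: "C1_family Z DZ" and W: "C1_family W DW"
    and Zs: "\<And>s u. ((\<lambda>s. Z s u) has_real_derivative W s u) (at s)"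
    and Ws: "\<And>s u. ((\<lambda>s. W s u) has_real_derivative A s u) (at s)"
    and cA: "continuous_on UNIV (\<lambda>(s, u). A s u)"
    and closed: "\<And>s. W s 0 = W s 1"
  shows "((\<lambda>s. integral {0..1} (\<lambda>u. W s u * DZ s u)) has_real_derivative
           integral {0..1} (\<lambda>u. A s u * DZ s u)) (at s)"
proof -
  have cW: "continuous_on UNIV (\<lambda>(s, u). W s u)" and cDW: "continuous_on UNIV (\<lambda>(s, u). DW s u)"
    and cDZ: "continuous_on UNIV (\<lambda>(s, u). DZ s u)"
    using W Z by (simp_all add: C1_family_def)
  have slices: "continuous_on {0..1} (\<lambda>u. W s u)" "continuous_on {0..1} (\<lambda>u. DZ s u)"
    "continuous_on {0..1} (\<lambda>u. DW s u)" "continuous_on {0..1} (\<lambda>u. A s u)" for s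
    using continuous_on_compose_Pair_UNIV[OF _ continuous_on_const continuous_on_id] cW cDZ cDW cA
    by blast+
  have "((\<lambda>s. integral {0..1} (\<lambda>u. W s u * DZ s u)) has_real_derivative
      integral {0..1} (\<lambda>u. A s u * DZ s u + W s u * DW s u)) (at s)"
  proof (rule has_real_derivative_integral_parametric)
    show "((\<lambda>s. W s u * DZ s u) has_real_derivative A s u * DZ s u + W s u * DW s u) (at s)" for s u
      using DERIV_mult[OF Ws C1_family_mixed_partial[OF Z W Zs]] by (simp add: mult.commute)
    show "continuous_on {0..1} (\<lambda>u. W s u * DZ s u)" for s
      by (intro continuous_on_mult slices)
    show "continuous_on UNIV (\<lambda>(s, u). A s u * DZ s u + W s u * DW s u)"
      using cA cW cDZ cDW by (simp add: case_prod_beta continuous_intros)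
  qed
  moreover have "integral {0..1} (\<lambda>u. W s u * DW s u) = 0"
  proof (rule integral_derivative_closed_eq_0[where h="\<lambda>u. (W s u)^2 / 2"])
    show "((\<lambda>u. (W s u)^2 / 2) has_real_derivative W s u * DW s u) (at u)" for u
      using DERIV_cdivide[OF DERIV_power[OF C1_family_has_real_derivative[OF W, of s u], of 2], of 2]
      by (simp add: mult.commute)
  qed (simp add: closed)
  moreover have "integral {0..1} (\<lambda>u. A s u * DZ s u + W s u * DW s u)
      = integral {0..1} (\<lambda>u. A s u * DZ s u) + integral {0..1} (\<lambda>u. W s u * DW s u)"
    by (intro integral_add integrable_continuous_real continuous_on_mult slices)
  ultimately show ?thesis by simp
qed

lemma oint_d_cmult: "oint_d (\<lambda>x. k * f x) g \<gamma> = k * oint_d f g \<gamma>"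
  by (simp add: oint_d_def mult.assoc)

lemma oint_d_const_closed_eq_0:
  assumes "\<And>u. (\<lambda>u. g (\<gamma> u)) differentiable (at u)" and "\<gamma> 0 = \<gamma> 1"
  shows "oint_d (\<lambda>x. 1) g \<gamma> = 0"
  using integral_derivative_closed_eq_0[where h="\<lambda>u. g (\<gamma> u)"] assms
  by (simp add: oint_d_def DERIV_deriv_iff_real_differentiable)

lemma oint_d_add_scaled_square:
  fixes f g z :: "real^2 \<Rightarrow> real"
  assumes g: "\<And>u. (\<lambda>u. g (\<gamma> u)) differentiable (at u)" "continuous_on {0..1} (deriv (\<lambda>u. g (\<gamma> u)))"
    and z: "\<And>u. (\<lambda>u. z (\<gamma> u)) differentiable (at u)" "continuous_on {0..1} (deriv (\<lambda>u. z (\<gamma> u)))"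
    and f: "continuous_on {0..1} (\<lambda>u. f (\<gamma> u))"
  shows "oint_d f (\<lambda>x. g x + k * (z x)^2) \<gamma> = oint_d f g \<gamma> + oint_d (\<lambda>x. 2 * k * f x * z x) z \<gamma>"
proof -
  have cz: "continuous_on {0..1} (\<lambda>u. z (\<gamma> u))"
    by (intro continuous_at_imp_continuous_on ballI differentiable_imp_continuous_within z(1))
  have "deriv (\<lambda>u. g (\<gamma> u) + k * (z (\<gamma> u))^2) u
      = deriv (\<lambda>u. g (\<gamma> u)) u + 2 * k * z (\<gamma> u) * deriv (\<lambda>u. z (\<gamma> u)) u" for u
    using g(1)[of u] z(1)[of u]
    by (intro DERIV_imp_deriv)
       (auto simp: DERIV_deriv_iff_real_differentiable[symmetric] intro!: derivative_eq_intros)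
  then have "oint_d f (\<lambda>x. g x + k * (z x)^2) \<gamma> = integral {0..1} (\<lambda>u.
      f (\<gamma> u) * deriv (\<lambda>u. g (\<gamma> u)) u + 2 * k * f (\<gamma> u) * z (\<gamma> u) * deriv (\<lambda>u. z (\<gamma> u)) u)"
    by (simp add: oint_d_def algebra_simps)
  also have "\<dots> = oint_d f g \<gamma> + oint_d (\<lambda>x. 2 * k * f x * z x) z \<gamma>"
    unfolding oint_d_def
    by (intro integral_add integrable_continuous_real continuous_intros f g(2) z(2) cz)
  finally show ?thesis .
qed

lemma smooth_field_along_loop:
  fixes F :: "real \<Rightarrow> real^2 \<Rightarrow> 'b::real_normed_vector"
  assumes "smooth (\<lambda>(t, x). F t x)" and "smooth (\<lambda>(t, x). \<phi> t x)" and "smooth c"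
  shows "(\<lambda>u. F t (loop_at \<phi> c t u)) differentiable (at u)"
    and "continuous_on S (\<lambda>u. F t (loop_at \<phi> c t u))"
proof -
  obtain DF where "C1_family (\<lambda>s u. F s (\<phi> s (c u))) DF"
    using C1_family_along_transported_curve[OF assms] .
  then have "((\<lambda>u. F t (\<phi> t (c u))) has_vector_derivative DF t u) (at u)"
    and "continuous_on UNIV (\<lambda>(s, u). F s (\<phi> s (c u)))"
    by (simp_all add: C1_family_def)
  then show "(\<lambda>u. F t (loop_at \<phi> c t u)) differentiable (at u)"
    and "continuous_on S (\<lambda>u. F t (loop_at \<phi> c t u))"
    using continuous_on_compose_Pair_UNIV[OF _ continuous_on_const continuous_on_id]
    by (auto simp: loop_at_def intro: differentiableI_vector)
qed

lemma continuous_on_deriv_smooth_field_along_loop: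
  fixes F :: "real \<Rightarrow> real^2 \<Rightarrow> real"
  assumes "smooth (\<lambda>(t, x). F t x)" and "smooth (\<lambda>(t, x). \<phi> t x)" and "smooth c"
  shows "continuous_on S (deriv (\<lambda>u. F t (loop_at \<phi> c t u)))"
proof -
  obtain DF where DF: "C1_family (\<lambda>s u. F s (\<phi> s (c u))) DF"
    using C1_family_along_transported_curve[OF assms] .
  then have "continuous_on S (\<lambda>u. DF t u)"
    using continuous_on_compose_Pair_UNIV[OF _ continuous_on_const continuous_on_id]
    by (auto simp: C1_family_def)
  then show ?thesis
    using C1_family_deriv[OF DF, of t] by (simp add: loop_at_def)
qed

lemma has_real_derivative_oint_d_transported:
  fixes \<zeta> w a :: "real \<Rightarrow> real^2 \<Rightarrow> real"
  assumes \<zeta>: "smooth (\<lambda>(t, x). \<zeta> t x)" and w: "smooth (\<lambda>(t, x). w t x)"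
    and \<phi>: "smooth (\<lambda>(t, x). \<phi> t x)" and c: "smooth c" "c 0 = c 1"
    and D\<zeta>: "\<And>t X. ((\<lambda>s. \<zeta> s (\<phi> s X)) has_real_derivative w t (\<phi> t X)) (at t)"
    and Dw: "\<And>t X. ((\<lambda>s. w s (\<phi> s X)) has_real_derivative a t (\<phi> t X)) (at t)"
    and a: "continuous_on UNIV (\<lambda>(t, x). a t x)"
  shows "((\<lambda>s. oint_d (w s) (\<zeta> s) (loop_at \<phi> c s)) has_real_derivative
           oint_d (a t) (\<zeta> t) (loop_at \<phi> c t)) (at t)"
proof -
  obtain DZ where Z: "C1_family (\<lambda>s u. \<zeta> s (\<phi> s (c u))) DZ"
    using C1_family_along_transported_curve[OF \<zeta> \<phi> c(1)] .
  obtain DW where W: "C1_family (\<lambda>s u. w s (\<phi> s (c u))) DW"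
    using C1_family_along_transported_curve[OF w \<phi> c(1)] .
  obtain \<gamma>' where "C1_family (\<lambda>s u. (s, \<phi> s (c u))) \<gamma>'"
    using C1_family_spacetime_transported_curve[OF \<phi> c(1)] .
  then have "continuous_on UNIV (\<lambda>(s, u). (s, \<phi> s (c u)))"
    by (simp add: C1_family_def)
  then have "continuous_on UNIV (\<lambda>(s, u). a s (\<phi> s (c u)))"
    using continuous_on_compose2[OF a] by (fastforce simp: case_prod_beta)
  from has_real_derivative_loop_integral_W_dZ[OF Z W D\<zeta> Dw this] c(2)
  show ?thesis
    unfolding oint_d_def loop_at_def C1_family_deriv[OF Z] by simp
qed

lemma has_real_derivative_wave_circulation:
  fixes \<zeta> w \<rho> :: "real \<Rightarrow> real^2 \<Rightarrow> real"
  assumes sigma: "\<sigma> \<noteq> 0"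
    and sm_zeta: "smooth (\<lambda>(t, x). \<zeta> t x)" and sm_w: "smooth (\<lambda>(t, x). w t x)"
    and sm_rho: "smooth (\<lambda>(t, x). \<rho> t x)" and sm_phi: "smooth (\<lambda>(t, x). \<phi> t x)"
    and c: "smooth c" "c 0 = c 1"
    and rho_pos: "\<And>t x. \<rho> t x > 0"
    and wave_w: "\<And>t X. ((\<lambda>s. w s (\<phi> s X)) has_real_derivative
                   (- \<rho>ref * \<zeta> t (\<phi> t X) / (\<sigma>^2 * Fr^2 * \<rho> t (\<phi> t X)))) (at t)"
    and wave_zeta: "\<And>t X. ((\<lambda>s. \<zeta> s (\<phi> s X)) has_real_derivative w t (\<phi> t X)) (at t)"
  shows "((\<lambda>s. oint_d (\<lambda>x. \<sigma>^2 * w s x) (\<zeta> s) (loop_at \<phi> c s)) has_real_derivative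
           oint_d (\<lambda>x. - \<rho>ref * \<zeta> t x / (Fr^2 * \<rho> t x)) (\<zeta> t) (loop_at \<phi> c t)) (at t)"
proof -
  have "continuous_on UNIV (\<lambda>(t, x). - \<rho>ref / (\<sigma>^2 * Fr^2) * (\<zeta> t x / \<rho> t x))"
    using smooth_continuous_on[OF sm_zeta] smooth_continuous_on[OF sm_rho] rho_pos
    unfolding case_prod_beta by (intro continuous_intros) (auto simp: less_imp_neq[symmetric])
  then have accel: "continuous_on UNIV (\<lambda>(t, x). - \<rho>ref * \<zeta> t x / (\<sigma>^2 * Fr^2 * \<rho> t x))"
    by simp
  have cancel: "\<sigma>^2 * (- \<rho>ref * \<zeta> t x / (\<sigma>^2 * Fr^2 * \<rho> t x))
      = - \<rho>ref * \<zeta> t x / (Fr^2 * \<rho> t x)" for x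
    using sigma by simp
  have "((\<lambda>s. \<sigma>^2 * oint_d (w s) (\<zeta> s) (loop_at \<phi> c s)) has_real_derivative
      \<sigma>^2 * oint_d (\<lambda>x. - \<rho>ref * \<zeta> t x / (\<sigma>^2 * Fr^2 * \<rho> t x)) (\<zeta> t) (loop_at \<phi> c t)) (at t)"
    by (intro DERIV_cmult has_real_derivative_oint_d_transported[OF sm_zeta sm_w sm_phi c
        wave_zeta wave_w accel])
  then show ?thesis
    by (simp only: oint_d_cmult flip: cancel)
qed

lemma oint_d_modified_pressure:
  fixes p \<zeta> \<rho> :: "real \<Rightarrow> real^2 \<Rightarrow> real"
  assumes sm_p: "smooth (\<lambda>(t, x). p t x)" and sm_zeta: "smooth (\<lambda>(t, x). \<zeta> t x)"
    and sm_rho: "smooth (\<lambda>(t, x). \<rho> t x)" and sm_phi: "smooth (\<lambda>(t, x). \<phi> t x)"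
    and c: "smooth c"
    and rho_pos: "\<And>t x. \<rho> t x > 0"
  shows "oint_d (\<lambda>x. - 1 / \<rho> t x) (\<lambda>x. p t x + \<rho>ref * (\<zeta> t x)^2 / (2 * Fr^2)) (loop_at \<phi> c t)
      = - oint_d (\<lambda>x. 1 / \<rho> t x) (p t) (loop_at \<phi> c t)
        + oint_d (\<lambda>x. - \<rho>ref * \<zeta> t x / (Fr^2 * \<rho> t x)) (\<zeta> t) (loop_at \<phi> c t)"
proof -
  let ?\<gamma> = "loop_at \<phi> c t"
  have "continuous_on {0..1} (\<lambda>u. - 1 / \<rho> t (?\<gamma> u))"
    using smooth_field_along_loop(2)[OF sm_rho sm_phi c] rho_pos
    by (intro continuous_intros) (auto simp: less_imp_neq[symmetric])
  then have "oint_d (\<lambda>x. - 1 / \<rho> t x) (\<lambda>x. p t x + \<rho>ref / (2 * Fr^2) * (\<zeta> t x)^2) ?\<gamma>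
      = oint_d (\<lambda>x. - 1 / \<rho> t x) (p t) ?\<gamma>
        + oint_d (\<lambda>x. 2 * (\<rho>ref / (2 * Fr^2)) * (- 1 / \<rho> t x) * \<zeta> t x) (\<zeta> t) ?\<gamma>"
    by (intro oint_d_add_scaled_square smooth_field_along_loop(1)
        continuous_on_deriv_smooth_field_along_loop sm_p sm_zeta sm_phi c)
  moreover have "(\<lambda>x. - 1 / \<rho> t x) = (\<lambda>x. - 1 * (1 / \<rho> t x))"
    and "(\<lambda>x. 2 * (\<rho>ref / (2 * Fr^2)) * (- 1 / \<rho> t x) * \<zeta> t x)
      = (\<lambda>x. - \<rho>ref * \<zeta> t x / (Fr^2 * \<rho> t x))"
    by auto
  ultimately show ?thesis
    by (simp only: oint_d_cmult) (simp add: field_simps)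
qed

lemma oint_d_exact_energy_eq_0:
  fixes v :: "real \<Rightarrow> real^2 \<Rightarrow> 'a::real_inner" and w :: "real \<Rightarrow> real^2 \<Rightarrow> real"
  assumes sm_v: "smooth (\<lambda>(t, x). v t x)" and sm_w: "smooth (\<lambda>(t, x). w t x)"
    and sm_phi: "smooth (\<lambda>(t, x). \<phi> t x)" and c: "smooth c" "c 0 = c 1"
  shows "oint_d (\<lambda>x. 1) (\<lambda>x. ((norm (v t x))^2 + k * (w t x)^2) / 2) (loop_at \<phi> c t) = 0"
proof (rule oint_d_const_closed_eq_0)
  fix u
  have dv: "(\<lambda>u. v t (loop_at \<phi> c t u)) differentiable (at u)"
    and dw: "(\<lambda>u. w t (loop_at \<phi> c t u)) differentiable (at u)"
    using smooth_field_along_loop(1) sm_v sm_w sm_phi c(1) by blast+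
  have dnv: "(\<lambda>u. (norm (v t (loop_at \<phi> c t u)))^2) differentiable (at u)"
    unfolding power2_norm_eq_inner by (rule differentiable_inner[OF dv dv])
  show "(\<lambda>u. ((norm (v t (loop_at \<phi> c t u)))^2 + k * (w t (loop_at \<phi> c t u))^2) / 2)
      differentiable (at u)"
    by (intro differentiable_divide differentiable_add[OF dnv] differentiable_mult
        differentiable_power differentiable_const dw) simp_all
qed (simp add: loop_at_def c(2))

theorem mainTheorem2:
  fixes v :: "real \<Rightarrow> real^2 \<Rightarrow> real^2"
    and \<zeta> w \<rho> p :: "real \<Rightarrow> real^2 \<Rightarrow> real"
    and \<phi> :: "real \<Rightarrow> real^2 \<Rightarrow> real^2"
    and \<sigma> Fr \<rho>ref :: real
    and c :: "real \<Rightarrow> real^2"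
    and t :: real
  assumes sigma: "\<sigma> \<noteq> 0" and Fr: "Fr \<noteq> 0"
    and sm_v: "smooth (\<lambda>(t, x). v t x)"
    and sm_zeta: "smooth (\<lambda>(t, x). \<zeta> t x)"
    and sm_w: "smooth (\<lambda>(t, x). w t x)"
    and sm_rho: "smooth (\<lambda>(t, x). \<rho> t x)"
    and sm_p: "smooth (\<lambda>(t, x). p t x)"
    and sm_phi: "smooth (\<lambda>(t, x). \<phi> t x)"
    and rho_pos: "\<And>t x. \<rho> t x > 0"
    and flow0: "\<And>X. \<phi> 0 X = X"
    and flow: "\<And>t X. ((\<lambda>s. \<phi> s X) has_vector_derivative v t (\<phi> t X)) (at t)"
    and wave_w: "\<And>t X. ((\<lambda>s. w s (\<phi> s X)) has_real_derivative
                   (- \<rho>ref * \<zeta> t (\<phi> t X) / (\<sigma>^2 * Fr^2 * \<rho> t (\<phi> t X)))) (at t)"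
    and wave_zeta: "\<And>t X. ((\<lambda>s. \<zeta> s (\<phi> s X)) has_real_derivative w t (\<phi> t X)) (at t)"
    and full_kelvin: "\<And>c' t'. smooth c' \<Longrightarrow> c' 0 = c' 1 \<Longrightarrow>
         ((\<lambda>s. oint_dr (v s) (loop_at \<phi> c' s)
                + oint_d (\<lambda>x. \<sigma>^2 * w s x) (\<zeta> s) (loop_at \<phi> c' s))
          has_real_derivative
            (oint_d (\<lambda>x. - 1 / \<rho> t' x) (\<lambda>x. p t' x + \<rho>ref * (\<zeta> t' x)^2 / (2 * Fr^2))
                    (loop_at \<phi> c' t')
             + oint_d (\<lambda>x. 1) (\<lambda>x. ((norm (v t' x))^2 + \<sigma>^2 * (w t' x)^2) / 2)
                    (loop_at \<phi> c' t'))) (at t')"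
    and c_smooth: "smooth c" and c_closed: "c 0 = c 1"
  shows "((\<lambda>s. oint_dr (v s) (loop_at \<phi> c s)) has_real_derivative
           - (oint_d (\<lambda>x. 1 / \<rho> t x) (p t) (loop_at \<phi> c t)
              - oint_d (\<lambda>x. 1) (\<lambda>x. (norm (v t x))^2 / 2) (loop_at \<phi> c t))) (at t)"
proof -
  have kinetic: "oint_d (\<lambda>x. 1) (\<lambda>x. (norm (v t x))^2 / 2) (loop_at \<phi> c t) = 0"
    using oint_d_exact_energy_eq_0[OF sm_v sm_w sm_phi c_smooth c_closed, where k=0] by simp
  from DERIV_diff[OF full_kelvin[OF c_smooth c_closed, of t]
      has_real_derivative_wave_circulation[OF sigma sm_zeta sm_w sm_rho sm_phi c_smooth c_closed
        rho_pos wave_w wave_zeta]]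
  show ?thesis
    by (simp only: oint_d_modified_pressure[OF sm_p sm_zeta sm_rho sm_phi c_smooth rho_pos]
        oint_d_exact_energy_eq_0[OF sm_v sm_w sm_phi c_smooth c_closed] kinetic) simp
qed

end
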